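(* Define $f_n\in\mathbb Z[X]$ by $f_0=0$, $f_1=1$, $f_{n+1}=Xf_n-f_{n-1}$. Let $R$ be a commutative ring and $M\in M_2(R)$ with $\det M=1$ such that at least one off-diagonal entry of $M$ is not a zero divisor. If $n=2k+1$ is an odd positive integer, then $M^n=-I$ holds if and only if $t=\operatorname{tr}M$ satisfies $f_{k+1}(t)-f_k(t)=0$. *)

theory Defs
  imports "HOL-Computational_Algebra.Polynomial" "Jordan_Normal_Form.Determinant"
begin

fun fpoly :: "nat \<Rightarrow> int poly" where
  "fpoly 0 = 0"
| "fpoly (Suc 0) = 1"
| "fpoly (Suc (Suc n)) = [:0, 1:] * fpoly (Suc n) - fpoly n"

definition eval_int_poly :: "int poly \<Rightarrow> 'a::comm_ring_1 \<Rightarrow> 'a" where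
  "eval_int_poly p t = poly (map_poly of_int p) t"

definition zero_divisor :: "'a::comm_ring_1 \<Rightarrow> bool" where
  "zero_divisor a \<longleftrightarrow> (\<exists>b. b \<noteq> 0 \<and> a * b = 0)"

definition mat_trace :: "'a::comm_ring_1 mat \<Rightarrow> 'a" where
  "mat_trace A = (\<Sum>i<dim_row A. A $$ (i, i))"

end

theory Submission
  imports Defs
begin

text \<open>
  By Cayley--Hamilton, \<open>M * M = t M - I\<close> with \<open>t = tr M\<close>, so \<open>M^(m+1) = f_(m+1)(t) M - f_m(t) I\<close>.
  As an off-diagonal entry of \<open>M\<close> is not a zero divisor, \<open>M^(2k+1) = -I\<close> amounts to
  \<open>f_(2k+1)(t) = 0\<close> and \<open>f_(2k)(t) = 1\<close>. With \<open>u = f_(k+1)(t)\<close> and \<open>v = f_k(t)\<close> the doubling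
  formulas read \<open>f_(2k+1)(t) = u^2 - v^2\<close> and \<open>f_(2k)(t) = 2uv - tv^2\<close>, and Cassini's identity
  \<open>u^2 - tuv + v^2 = 1\<close> makes these two conditions together equivalent to \<open>u = v\<close>.
\<close>

fun lucas_U :: "'a::comm_ring_1 \<Rightarrow> nat \<Rightarrow> 'a" where
  "lucas_U t 0 = 0"
| "lucas_U t (Suc 0) = 1"
| "lucas_U t (Suc (Suc n)) = t * lucas_U t (Suc n) - lucas_U t n"

lemma map_poly_of_int_diff:
  "map_poly (of_int :: int \<Rightarrow> 'a::comm_ring_1) (p - q) = map_poly of_int p - map_poly of_int q"
  by (rule poly_eqI) (simp add: coeff_map_poly)

lemma eval_int_poly_fpoly: "eval_int_poly (fpoly n) t = lucas_U t n"
  by (induction n rule: fpoly.induct) (simp_all add: eval_int_poly_def map_poly_of_int_diff map_poly_pCons)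

lemma lucas_U_add:
  "lucas_U t (m + n + 1) = lucas_U t (m + 1) * lucas_U t (n + 1) - lucas_U t m * lucas_U t n"
proof (induction t n rule: lucas_U.induct)
  case (3 t n)
  let ?U = "lucas_U t"
  have "?U (m + Suc (Suc n) + 1) = t * ?U (m + Suc n + 1) - ?U (m + n + 1)"
    by simp
  also have "\<dots> = ?U (m + 1) * (t * ?U (Suc n + 1) - ?U (n + 1)) - ?U m * (t * ?U (Suc n) - ?U n)"
    unfolding 3 by (simp add: algebra_simps)
  also have "\<dots> = ?U (m + 1) * ?U (Suc (Suc n) + 1) - ?U m * ?U (Suc (Suc n))"
    by simp
  finally show ?case .
qed (simp_all add: algebra_simps)

lemma lucas_U_cassini: "lucas_U t (k + 1) ^ 2 - t * lucas_U t (k + 1) * lucas_U t k + lucas_U t k ^ 2 = 1"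
  by (induction k) (simp_all add: algebra_simps power2_eq_square)

lemma lucas_U_double_Suc: "lucas_U t (2 * k + 1) = lucas_U t (k + 1) ^ 2 - lucas_U t k ^ 2"
  using lucas_U_add[of t k k] by (simp add: mult_2 power2_eq_square)

lemma lucas_U_double: "lucas_U t (2 * k) = 2 * lucas_U t (k + 1) * lucas_U t k - t * lucas_U t k ^ 2"
proof -
  let ?U = "lucas_U t"
  have "?U (2 * k) = t * ?U (2 * k + 1) - ?U (k + 1 + k + 1)"
    by (simp add: numeral_2_eq_2)
  also have "\<dots> = t * (?U (k + 1) ^ 2 - ?U k ^ 2) - (t * ?U (k + 1) - ?U k) * ?U (k + 1) + ?U (k + 1) * ?U k"
    unfolding lucas_U_double_Suc lucas_U_add by (simp add: mult.commute)
  also have "\<dots> = 2 * ?U (k + 1) * ?U k - t * ?U k ^ 2"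
    by (simp add: algebra_simps power2_eq_square)
  finally show ?thesis .
qed

lemma det_mat1: "B \<in> carrier_mat 1 1 \<Longrightarrow> det B = B $$ (0,0)"
  by (subst det_def) auto

lemma det_mat2:
  fixes A :: "'a::comm_ring_1 mat"
  assumes "A \<in> carrier_mat 2 2"
  shows "det A = A $$ (0,0) * A $$ (1,1) - A $$ (0,1) * A $$ (1,0)"
proof -
  have "det A = (\<Sum>i<2. A $$ (i,0) * cofactor A i 0)"
    using assms by (rule laplace_expansion_column) auto
  then show ?thesis
    using assms by (simp add: numeral_2_eq_2 cofactor_def det_mat1 mat_delete_def insert_index_def)
qed

lemma mat_trace_mat2: "A \<in> carrier_mat 2 2 \<Longrightarrow> mat_trace A = A $$ (0,0) + A $$ (1,1)"
  by (simp add: mat_trace_def numeral_2_eq_2)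

lemma mat2_cayley_hamilton:
  fixes A :: "'a::comm_ring_1 mat"
  assumes A: "A \<in> carrier_mat 2 2"
  shows "A * A = mat_trace A \<cdot>\<^sub>m A - det A \<cdot>\<^sub>m 1\<^sub>m 2"
  by (rule eq_matI) (use A in \<open>auto simp: det_mat2 mat_trace_mat2 scalar_prod_def numeral_2_eq_2 less_Suc_eq algebra_simps\<close>)

lemma pow_mat_eq_lucas_U:
  fixes A :: "'a::comm_ring_1 mat"
  assumes A: "A \<in> carrier_mat 2 2" and det: "det A = 1"
  shows "A ^\<^sub>m Suc m = lucas_U (mat_trace A) (Suc m) \<cdot>\<^sub>m A - lucas_U (mat_trace A) m \<cdot>\<^sub>m 1\<^sub>m 2"
proof (induction m)
  case 0
  show ?case using A by (intro eq_matI) auto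
next
  case (Suc m)
  define t where "t = mat_trace A"
  define u where "u = lucas_U t (Suc m)"
  define v where "v = lucas_U t m"
  have "A ^\<^sub>m Suc (Suc m) = (u \<cdot>\<^sub>m A - v \<cdot>\<^sub>m 1\<^sub>m 2) * A"
    using Suc by (simp add: t_def u_def v_def)
  also have "\<dots> = u \<cdot>\<^sub>m (A * A) - v \<cdot>\<^sub>m A"
    using A by (simp add: minus_mult_distrib_mat[of _ 2 2] mult_smult_assoc_mat[of _ 2 2])
  also have "\<dots> = (t * u - v) \<cdot>\<^sub>m A - u \<cdot>\<^sub>m 1\<^sub>m 2"
    unfolding mat2_cayley_hamilton[OF A] det t_def
    by (rule eq_matI) (use A in \<open>auto simp: algebra_simps\<close>)
  finally show ?case by (simp add: t_def u_def v_def)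
qed

lemma cassini_form_eq_iff:
  fixes u v t :: "'a::comm_ring_1"
  assumes cassini: "u ^ 2 - t * u * v + v ^ 2 = 1"
  shows "u ^ 2 - v ^ 2 = 0 \<and> 2 * u * v - t * v ^ 2 = 1 \<longleftrightarrow> u = v"
proof
  assume "u ^ 2 - v ^ 2 = 0 \<and> 2 * u * v - t * v ^ 2 = 1"
  then have sq: "u ^ 2 - v ^ 2 = 0" and dbl: "2 * u * v - t * v ^ 2 = 1" by auto
  have s1: "t * v * (u - v) = (u - v) * (u - v)"
  proof -
    have "(u - v) * (u - v) - t * v * (u - v) = (u ^ 2 - t * u * v + v ^ 2) - (2 * u * v - t * v ^ 2)"
      by (simp add: algebra_simps power2_eq_square)
    then show ?thesis using cassini dbl by simp
  qed
  have s2: "(u - v) * (u - v) = - (2 * v * (u - v))"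
  proof -
    have "(u - v) * (u - v) + 2 * v * (u - v) = u ^ 2 - v ^ 2"
      by (simp add: algebra_simps power2_eq_square)
    then show ?thesis using sq by (simp add: eq_neg_iff_add_eq_0)
  qed
  have "u - v = (u - v) * (2 * u * v - t * v ^ 2)"
    using dbl by simp
  also have "\<dots> = 2 * v * v * (u - v) + 2 * v * ((u - v) * (u - v)) - v * (t * v * (u - v))"
    by (simp add: algebra_simps power2_eq_square)
  also have "\<dots> = 0"
    unfolding s1 s2 by (simp add: algebra_simps)
  finally show "u = v" by simp
next
  assume "u = v"
  with cassini show "u ^ 2 - v ^ 2 = 0 \<and> 2 * u * v - t * v ^ 2 = 1"
    by (simp add: algebra_simps power2_eq_square)
qed

lemma smult_sub_smult_one_eq_neg_one_iff:
  fixes A :: "'a::comm_ring_1 mat"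
  assumes A: "A \<in> carrier_mat 2 2"
    and off_diag: "\<not> zero_divisor (A $$ (0, 1)) \<or> \<not> zero_divisor (A $$ (1, 0))"
  shows "x \<cdot>\<^sub>m A - y \<cdot>\<^sub>m 1\<^sub>m 2 = - 1\<^sub>m 2 \<longleftrightarrow> x = 0 \<and> y = 1"
proof
  assume eq: "x \<cdot>\<^sub>m A - y \<cdot>\<^sub>m 1\<^sub>m 2 = - 1\<^sub>m 2"
  have "x * A $$ (0, 1) = 0" "x * A $$ (1, 0) = 0" "x * A $$ (0, 0) - y = -1"
    using A arg_cong[OF eq, of "\<lambda>B. B $$ (0, 1)"] arg_cong[OF eq, of "\<lambda>B. B $$ (1, 0)"]
      arg_cong[OF eq, of "\<lambda>B. B $$ (0, 0)"] by auto
  moreover from this off_diag have "x = 0"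
    unfolding zero_divisor_def by (metis mult.commute)
  ultimately show "x = 0 \<and> y = 1" by simp
qed (use A in \<open>auto intro: eq_matI\<close>)

theorem mainTheorem19:
  fixes M :: "'a::comm_ring_1 mat" and k n :: nat
  assumes "M \<in> carrier_mat 2 2"
    and "det M = 1"
    and "\<not> zero_divisor (M $$ (0, 1)) \<or> \<not> zero_divisor (M $$ (1, 0))"
    and "n = 2 * k + 1"
  shows "M ^\<^sub>m n = - 1\<^sub>m 2 \<longleftrightarrow>
         eval_int_poly (fpoly (k + 1)) (mat_trace M) - eval_int_poly (fpoly k) (mat_trace M) = 0"
proof -
  define t where "t = mat_trace M"
  have "M ^\<^sub>m n = lucas_U t (2 * k + 1) \<cdot>\<^sub>m M - lucas_U t (2 * k) \<cdot>\<^sub>m 1\<^sub>m 2"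
    using pow_mat_eq_lucas_U[OF assms(1,2), of "2 * k"] assms(4) by (simp add: t_def)
  then have "M ^\<^sub>m n = - 1\<^sub>m 2 \<longleftrightarrow> lucas_U t (2 * k + 1) = 0 \<and> lucas_U t (2 * k) = 1"
    using smult_sub_smult_one_eq_neg_one_iff[OF assms(1,3)] by simp
  also have "\<dots> \<longleftrightarrow> lucas_U t (k + 1) = lucas_U t k"
    unfolding lucas_U_double_Suc lucas_U_double by (rule cassini_form_eq_iff[OF lucas_U_cassini])
  finally show ?thesis
    by (simp add: eval_int_poly_fpoly t_def)
qed

end
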